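(* Let $\beta$ be an ordered partition of $N$. The set $X^\beta=\{t_\eta w: w\in\bar W^\beta,\ \eta\in\bar P_-(w)\}\subseteq W$ is a complete set of representatives of the double coset space $\bar W\backslash W/\bar W_\beta$. Moreover $X^\beta\subseteq W^\beta$.
   Context: Fix $N\ge2$. $\bar P=\bigoplus_{i=1}^N\mathbb Z\epsilon_i$ with $(\epsilon_i,\epsilon_j)=\delta_{ij}$; $\bar R=\{\alpha_{ij}=\epsilon_i-\epsilon_j:i\ne j\}$, $\bar R_+=\{\alpha_{ij}:i<j\}$, $\alpha_i=\alpha_{i,i+1}$; $\bar P_-=\{\eta\in\bar P:(\eta,\alpha)\le0\ \forall\alpha\in\bar R_+\}$. $\bar W=\mathfrak S_N$ acts by permuting indices; $W=\bar W\ltimes\bar P$ with elements $wt_\eta$, $wt_\eta w^{-1}=t_{w(\eta)}$. Affine roots (with formal $\delta$): $R=\{\bar\alpha+k\delta\}$, $R_+=\{\bar\alpha+k\delta:\bar\alpha\in\bar R_+,k\ge0\}\cup\{-\bar\alpha+k\delta:\bar\alpha\in\bar R_+,k>0\}$, $R_-=R\setminus R_+$; $W$ acts on $R$ by $w(\bar\alpha+k\delta)=w(\bar\alpha)+k\delta$, $t_\eta(\bar\alpha+k\delta)=\bar\alpha+(k-(\eta,\bar\alpha))\delta$; $l(w)=\#(R_+\cap w^{-1}(R_-))$. An ordered partition $\beta$ of $N$ gives blocks of consecutive indices of sizes $\beta_1,\dots,\beta_r$; $\bar R_\beta=\{\alpha_{ij}:i,j\text{ in the same block}\}$, $\bar R_{\beta,+}=\bar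 R_\beta\cap\bar R_+$, $\bar W_\beta$ the subgroup generated by $s_{\alpha_i}$, $\alpha_i\in\bar R_\beta$; $W^\beta=\{w\in W:l(wu)\ge l(w)\ \forall u\in\bar W_\beta\}$, $\bar W^\beta=W^\beta\cap\bar W$. For $w\in\bar W^\beta$, $\eta_w\in\bar P_-$ is defined by $(\eta_w,\epsilon_1)=0$ and $(\eta_w,\alpha_i)=-1$ if $\alpha_i\in w(\bar R_+\setminus\bar R_{\beta,+})$, $0$ otherwise ($1\le i\le N-1$); $\bar P_-(w)=\{\eta+\eta_w:\eta\in\bar P_-\}$. *)

theory Defs
  imports "HOL-Combinatorics.Combinatorics"
begin

(* Indices are 0-based: epsilon_1..epsilon_N become indices 0..N-1.
   Pbar = Z^N: functions nat => int vanishing outside {0..<N}.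
   An element (eta, w) of the extended affine Weyl group W stands for t_eta w. *)

definition Pbar :: "nat \<Rightarrow> (nat \<Rightarrow> int) set" where
  "Pbar N = {\<eta>. \<forall>i\<ge>N. \<eta> i = 0}"

definition Pbar_minus :: "nat \<Rightarrow> (nat \<Rightarrow> int) set" where
  "Pbar_minus N = {\<eta> \<in> Pbar N. \<forall>i j. i < j \<and> j < N \<longrightarrow> \<eta> i - \<eta> j \<le> 0}"

definition Wbar :: "nat \<Rightarrow> (nat \<Rightarrow> nat) set" where
  "Wbar N = {w. w permutes {0..<N}}"

type_synonym waff = "(nat \<Rightarrow> int) \<times> (nat \<Rightarrow> nat)"

definition Waff :: "nat \<Rightarrow> waff set" where
  "Waff N = Pbar N \<times> Wbar N"

(* action of a permutation on weights: w(eps_i) = eps_(w i) *)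
definition wact :: "(nat \<Rightarrow> nat) \<Rightarrow> (nat \<Rightarrow> int) \<Rightarrow> (nat \<Rightarrow> int)" where
  "wact w \<eta> = \<eta> \<circ> inv w"

(* (t_eta w)(t_mu v) = t_(eta + w mu) (w v) *)
definition wmult :: "waff \<Rightarrow> waff \<Rightarrow> waff" where
  "wmult x y = (\<lambda>j. fst x j + wact (snd x) (fst y) j, snd x \<circ> snd y)"

(* affine root (i,j,k) = eps_i - eps_j + k delta, with i \<noteq> j, i,j < N *)
definition affroots :: "nat \<Rightarrow> (nat \<times> nat \<times> int) set" where
  "affroots N = {(i,j,k). i < N \<and> j < N \<and> i \<noteq> j}"

definition pos_root :: "nat \<times> nat \<times> int \<Rightarrow> bool" where
  "pos_root a = (case a of (i,j,k) \<Rightarrow> (i < j \<and> k \<ge> 0) \<or> (j < i \<and> k > 0))"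

definition root_act :: "waff \<Rightarrow> nat \<times> nat \<times> int \<Rightarrow> nat \<times> nat \<times> int" where
  "root_act x a = (case a of (i,j,k) \<Rightarrow>
     (snd x i, snd x j, k - (fst x (snd x i) - fst x (snd x j))))"

definition len :: "nat \<Rightarrow> waff \<Rightarrow> nat" where
  "len N x = card {a \<in> affroots N. pos_root a \<and> \<not> pos_root (root_act x a)}"

definition ordered_partition :: "nat \<Rightarrow> nat list \<Rightarrow> bool" where
  "ordered_partition N \<beta> \<longleftrightarrow> (\<forall>b\<in>set \<beta>. 0 < b) \<and> sum_list \<beta> = N"

definition same_block :: "nat list \<Rightarrow> nat \<Rightarrow> nat \<Rightarrow> bool" where
  "same_block \<beta> a b \<longleftrightarrow> (\<exists>m < length \<beta>.
      sum_list (take m \<beta>) \<le> a \<and> a < sum_list (take (Suc m) \<beta>) \<and>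
      sum_list (take m \<beta>) \<le> b \<and> b < sum_list (take (Suc m) \<beta>))"

(* Wbar_beta: subgroup generated by the simple reflections s_(alpha_i), alpha_i in R_beta
   (finite group, generators are involutions, so the monoid closure suffices) *)
inductive_set Wbar_beta :: "nat \<Rightarrow> nat list \<Rightarrow> (nat \<Rightarrow> nat) set" for N \<beta> where
  id: "id \<in> Wbar_beta N \<beta>"
| step: "\<lbrakk>v \<in> Wbar_beta N \<beta>; Suc i < N; same_block \<beta> i (Suc i)\<rbrakk>
           \<Longrightarrow> transpose i (Suc i) \<circ> v \<in> Wbar_beta N \<beta>"

definition W_beta :: "nat \<Rightarrow> nat list \<Rightarrow> waff set" where
  "W_beta N \<beta> = {x \<in> Waff N. \<forall>u \<in> Wbar_beta N \<beta>. len N (wmult x (\<lambda>_. 0, u)) \<ge> len N x}"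

definition Wbar_beta_min :: "nat \<Rightarrow> nat list \<Rightarrow> (nat \<Rightarrow> nat) set" where
  "Wbar_beta_min N \<beta> = {w \<in> Wbar N. (\<lambda>_. 0, w) \<in> W_beta N \<beta>}"

(* alpha_i in w(Rbar_+ \ Rbar_(beta,+))  iff  w^-1(alpha_i) = alpha_(w^-1 i, w^-1 (i+1))
   is positive and not in R_beta *)
definition desc_cond :: "nat list \<Rightarrow> (nat \<Rightarrow> nat) \<Rightarrow> nat \<Rightarrow> bool" where
  "desc_cond \<beta> w i \<longleftrightarrow> inv w i < inv w (Suc i) \<and> \<not> same_block \<beta> (inv w i) (inv w (Suc i))"

(* eta_w: (eta_w, eps_1) = 0, (eta_w, alpha_i) = -1 if desc_cond, else 0 *)
definition eta_w :: "nat \<Rightarrow> nat list \<Rightarrow> (nat \<Rightarrow> nat) \<Rightarrow> (nat \<Rightarrow> int)" where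
  "eta_w N \<beta> w = (\<lambda>j. if j < N then (\<Sum>i<j. if desc_cond \<beta> w i then 1 else 0) else 0)"

definition Pbar_minus_w :: "nat \<Rightarrow> nat list \<Rightarrow> (nat \<Rightarrow> nat) \<Rightarrow> (nat \<Rightarrow> int) set" where
  "Pbar_minus_w N \<beta> w = {(\<lambda>j. \<eta> j + eta_w N \<beta> w j) | \<eta>. \<eta> \<in> Pbar_minus N}"

definition X_beta :: "nat \<Rightarrow> nat list \<Rightarrow> waff set" where
  "X_beta N \<beta> = {(\<eta>, w) | \<eta> w. w \<in> Wbar_beta_min N \<beta> \<and> \<eta> \<in> Pbar_minus_w N \<beta> w}"

end

(*
  The double coset of t_\<eta> w in W-bar \ W / W-bar_\<beta> is determined by the function
  \<lambda> = \<eta> \<circ> w on positions: the left factor u leaves \<lambda> unchanged and the right factor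
  v \<in> W-bar_\<beta> replaces it by \<lambda> \<circ> v. So the double coset corresponds to the
  rearrangement of \<lambda> that is sorted within every block; it is reached by bubble sort
  with adjacent transpositions of W-bar_\<beta>, and it is unique.

  For (\<mu>, \<sigma>) \<in> X^\<beta> the conditions on \<mu> and \<sigma> say exactly that \<sigma> lists the positions
  in increasing order of the key (\<lambda> p, -block p, p), where \<lambda> = \<mu> \<circ> \<sigma>. Hence \<sigma> is the
  rank permutation of this key, and (\<mu>, \<sigma>) is determined by the sorted \<lambda>; conversely
  the rank permutation of a sorted \<lambda> gives an element of X^\<beta>.

  Minimality is a count of inversions: when \<sigma> is increasing and \<mu> \<circ> \<sigma> sorted on every
  block, a block-preserving u maps the inversions of t_\<mu> \<sigma> injectively into those of
  t_\<mu> \<sigma> u, while a descent of w inside a block is an inversion removed by the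
  corresponding simple reflection.
*)

theory Submission
  imports Defs "HOL-Library.Product_Lexorder"
begin

section \<open>Rank permutations and sorted rearrangements\<close>

definition rank_perm :: "nat \<Rightarrow> (nat \<Rightarrow> 'a::linorder) \<Rightarrow> nat \<Rightarrow> nat" where
  "rank_perm n f p = (if p < n then card {q. q < n \<and> f q < f p} else p)"

lemma rank_perm_less_iff:
  assumes "inj_on f {0..<n}" and "p < n" and "q < n"
  shows "rank_perm n f p < rank_perm n f q \<longleftrightarrow> f p < f q"
proof -
  have strict: "rank_perm n f p' < rank_perm n f q'"
    if "p' < n" "q' < n" "f p' < f q'" for p' q'
  proof -
    have "{r. r < n \<and> f r < f p'} \<subset> {r. r < n \<and> f r < f q'}"
      using that by auto
    then show ?thesis
      using that by (simp add: rank_perm_def psubset_card_mono)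
  qed
  show ?thesis
  proof
    assume "rank_perm n f p < rank_perm n f q"
    then have "p \<noteq> q" and "\<not> f q < f p"
      using strict[of q p] assms(2,3) by auto
    then show "f p < f q"
      using assms inj_onD[OF assms(1), of p q] by fastforce
  qed (rule strict[OF assms(2,3)])
qed

lemma rank_perm_permutes:
  assumes "inj_on f {0..<n}"
  shows "rank_perm n f permutes {0..<n}"
proof (rule bij_imp_permutes)
  have inj: "inj_on (rank_perm n f) {0..<n}"
  proof (rule inj_onI)
    fix p q assume "p \<in> {0..<n}" "q \<in> {0..<n}" "rank_perm n f p = rank_perm n f q"
    then have "\<not> f p < f q" "\<not> f q < f p"
      using rank_perm_less_iff[OF assms] by (metis atLeastLessThan_iff less_irrefl)+
    then show "p = q"
      using inj_onD[OF assms] \<open>p \<in> {0..<n}\<close> \<open>q \<in> {0..<n}\<close> by fastforce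
  qed
  have "card {q. q < n \<and> f q < f p} < n" if "p < n" for p
    using that by (intro psubset_card_mono[of "{..<n}", simplified]) auto
  then have "rank_perm n f ` {0..<n} \<subseteq> {0..<n}"
    by (auto simp: rank_perm_def)
  then show "bij_betw (rank_perm n f) {0..<n} {0..<n}"
    using inj by (simp add: bij_betw_def endo_inj_surj)
qed (simp add: rank_perm_def)

lemma rank_perm_unique:
  assumes \<sigma>: "\<sigma> permutes {0..<n}"
    and adjacent: "\<And>i. Suc i < n \<Longrightarrow> f (inv \<sigma> i) < f (inv \<sigma> (Suc i))"
  shows "\<sigma> = rank_perm n f"
proof
  fix p
  have inv_less: "f (inv \<sigma> i) < f (inv \<sigma> j)" if "i < j" "j < n" for i j
  proof (rule lift_Suc_mono_less_ivl[where f = "\<lambda>k. f (inv \<sigma> k)" and N = "{m. Suc m < n}"])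
    show "{i..<j} \<subseteq> {m. Suc m < n}"
      using that by auto
  qed (use that adjacent in auto)
  have mono: "f p' < f q'" if "p' < n" "q' < n" "\<sigma> p' < \<sigma> q'" for p' q'
  proof -
    have "\<sigma> q' < n"
      using permutes_in_image[OF \<sigma>] that by simp
    then show ?thesis
      using inv_less[of "\<sigma> p'" "\<sigma> q'"] that by (simp add: permutes_inverses(2)[OF \<sigma>])
  qed
  have less_iff: "\<sigma> q < \<sigma> p \<longleftrightarrow> f q < f p" if "p < n" "q < n" for q
    by (metis \<sigma> linorder_neqE mono order_less_asym permutes_inverses(2) that(1,2))
  show "\<sigma> p = rank_perm n f p"
  proof (cases "p < n")
    case True
    have "\<sigma> p < n"
      using permutes_in_image[OF \<sigma>] True by simp
    have "\<sigma> ` {q. q < n \<and> \<sigma> q < \<sigma> p} = {..<\<sigma> p}"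
    proof
      show "{..<\<sigma> p} \<subseteq> \<sigma> ` {q. q < n \<and> \<sigma> q < \<sigma> p}"
      proof
        fix r assume "r \<in> {..<\<sigma> p}"
        moreover have "inv \<sigma> r < n" "\<sigma> (inv \<sigma> r) = r"
          using \<open>r \<in> {..<\<sigma> p}\<close> \<open>\<sigma> p < n\<close> permutes_in_image[OF permutes_inv[OF \<sigma>]]
            permutes_inverses(1)[OF \<sigma>] by auto
        ultimately show "r \<in> \<sigma> ` {q. q < n \<and> \<sigma> q < \<sigma> p}"
          by (metis (mono_tags, lifting) image_eqI lessThan_iff mem_Collect_eq)
      qed
    qed auto
    moreover have "inj_on \<sigma> {q. q < n \<and> \<sigma> q < \<sigma> p}"
      using permutes_inj[OF \<sigma>] by (rule inj_on_subset) simp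
    ultimately have "card {q. q < n \<and> \<sigma> q < \<sigma> p} = \<sigma> p"
      by (metis card_image card_lessThan)
    moreover have "{q. q < n \<and> \<sigma> q < \<sigma> p} = {q. q < n \<and> f q < f p}"
      using less_iff True by auto
    ultimately show ?thesis
      using True by (simp add: rank_perm_def)
  next
    case False
    then show ?thesis
      using permutes_not_in[OF \<sigma>] by (simp add: rank_perm_def)
  qed
qed

lemma mono_on_bij_betw_eq:
  fixes f :: "'a::linorder \<Rightarrow> 'b::linorder"
  assumes "finite A" and \<pi>: "bij_betw \<pi> A A"
    and "mono_on A f" and "mono_on A (f \<circ> \<pi>)" and "p \<in> A"
  shows "f (\<pi> p) = f p"
proof -
  define xs where "xs = sorted_list_of_set A"
  have set_xs: "set xs = A"
    using \<open>finite A\<close> by (simp add: xs_def)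
  have "sorted xs"
    by (simp add: xs_def)
  then have sorted_f: "sorted (map f xs)" and sorted_f\<pi>: "sorted (map (f \<circ> \<pi>) xs)"
    using assms(3,4) sorted_map_mono unfolding set_xs[symmetric] by blast+
  have "mset (map (f \<circ> \<pi>) xs) = mset (map f xs)"
  proof -
    have "mset xs = mset_set A"
      unfolding xs_def by (metis mset_sorted_list_of_multiset sorted_list_of_mset_set)
    moreover have "image_mset \<pi> (mset_set A) = mset_set A"
      using \<pi> by (simp add: bij_betw_def image_mset_mset_set)
    ultimately show ?thesis
      by (metis mset_map multiset.map_comp)
  qed
  then have "sort (map f xs) = map (f \<circ> \<pi>) xs"
    using sorted_f\<pi> by (rule properties_for_sort)
  then have "map f xs = map (f \<circ> \<pi>) xs"
    using sorted_f by (simp add: sorted_sort_id)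
  then show ?thesis
    using \<open>p \<in> A\<close> set_xs by (metis comp_apply map_eq_conv)
qed

section \<open>Translation parts and lengths\<close>

lemma eta_w_Suc:
  "Suc i < N \<Longrightarrow> eta_w N \<beta> \<sigma> (Suc i) = eta_w N \<beta> \<sigma> i + (if desc_cond \<beta> \<sigma> i then 1 else 0)"
  by (simp add: eta_w_def)

lemma mem_Pbar_minus_iff:
  "e \<in> Pbar_minus N \<longleftrightarrow> (\<forall>j\<ge>N. e j = 0) \<and> (\<forall>i. Suc i < N \<longrightarrow> e i \<le> e (Suc i))"
proof -
  have "(\<forall>i j. i < j \<and> j < N \<longrightarrow> e i \<le> e j) \<longleftrightarrow> (\<forall>i. Suc i < N \<longrightarrow> e i \<le> e (Suc i))"
  proof (intro iffI allI impI)
    fix i j assume adjacent: "\<forall>i. Suc i < N \<longrightarrow> e i \<le> e (Suc i)" and "i < j \<and> j < N"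
    then have "{i..<j} \<subseteq> {m. Suc m < N}"
      by auto
    then show "e i \<le> e j"
      using lift_Suc_mono_le_ivl[where f = e and N = "{m. Suc m < N}" and n = i and n' = j]
        adjacent \<open>i < j \<and> j < N\<close> by auto
  qed simp
  then show ?thesis
    by (simp add: Pbar_minus_def Pbar_def)
qed

lemma mem_Pbar_minus_w_iff:
  "\<mu> \<in> Pbar_minus_w N \<beta> \<sigma> \<longleftrightarrow> (\<forall>j\<ge>N. \<mu> j = 0) \<and>
     (\<forall>i. Suc i < N \<longrightarrow> \<mu> i + (if desc_cond \<beta> \<sigma> i then 1 else 0) \<le> \<mu> (Suc i))"
proof -
  define e where "e j = \<mu> j - eta_w N \<beta> \<sigma> j" for j
  have membership: "\<mu> \<in> Pbar_minus_w N \<beta> \<sigma> \<longleftrightarrow> e \<in> Pbar_minus N"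
  proof
    assume "\<mu> \<in> Pbar_minus_w N \<beta> \<sigma>"
    then obtain \<eta> where "\<eta> \<in> Pbar_minus N" "\<mu> = (\<lambda>j. \<eta> j + eta_w N \<beta> \<sigma> j)"
      unfolding Pbar_minus_w_def by blast
    then have "e = \<eta>"
      unfolding e_def by auto
    then show "e \<in> Pbar_minus N"
      using \<open>\<eta> \<in> Pbar_minus N\<close> by simp
  next
    assume "e \<in> Pbar_minus N"
    then show "\<mu> \<in> Pbar_minus_w N \<beta> \<sigma>"
      unfolding Pbar_minus_w_def by (intro CollectI exI[of _ e]) (simp add: e_def)
  qed
  have zero: "(\<forall>j\<ge>N. e j = 0) \<longleftrightarrow> (\<forall>j\<ge>N. \<mu> j = 0)"
    by (simp add: e_def eta_w_def)
  have adjacent: "e i \<le> e (Suc i) \<longleftrightarrow> \<mu> i + (if desc_cond \<beta> \<sigma> i then 1 else 0) \<le> \<mu> (Suc i)"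
    if "Suc i < N" for i
    using that by (simp add: e_def eta_w_Suc add1_zle_eq)
  show ?thesis
    unfolding membership mem_Pbar_minus_iff zero using adjacent by simp
qed

lemma wmult_right_perm: "wmult x (\<lambda>_. 0, u) = (fst x, snd x \<circ> u)"
  by (simp add: wmult_def wact_def o_def)

lemma wmult_double_coset:
  "wmult (\<lambda>_. 0, u) (wmult (\<eta>, w) (\<lambda>_. 0, v)) = (\<eta> \<circ> inv u, u \<circ> w \<circ> v)"
  by (simp add: wmult_def wact_def fun_eq_iff)

definition inversion_set :: "nat \<Rightarrow> waff \<Rightarrow> (nat \<times> nat \<times> int) set" where
  "inversion_set N x = {a \<in> affroots N. pos_root a \<and> \<not> pos_root (root_act x a)}"

lemma len_eq_card_inversion_set: "len N x = card (inversion_set N x)"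
  by (simp add: len_def inversion_set_def)

lemma root_act_perm [simp]: "root_act (\<lambda>_. 0, u) (i, j, k) = (u i, u j, k)"
  by (simp add: root_act_def)

lemma root_act_wmult_right_perm:
  "root_act (wmult x (\<lambda>_. 0, u)) a = root_act x (root_act (\<lambda>_. 0, u) a)"
  by (cases a) (simp add: wmult_right_perm root_act_def)

lemma pos_root_level_nonneg: "pos_root (i, j, k) \<Longrightarrow> 0 \<le> k"
  by (auto simp: pos_root_def)

lemma pos_root_of_level_pos: "i \<noteq> j \<Longrightarrow> 0 < k \<Longrightarrow> pos_root (i, j, k)"
  by (auto simp: pos_root_def)

lemma finite_nonneg_level_negated_roots:
  assumes "inj_on (snd x) {0..<N}"
  shows "finite {(i, j, k). (i, j, k) \<in> affroots N \<and> 0 \<le> k \<and> \<not> pos_root (root_act x (i, j, k))}"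
proof -
  obtain \<eta> w where x: "x = (\<eta>, w)"
    by (cases x)
  have bound: "k \<le> \<eta> (w i) - \<eta> (w j)"
    if "(i, j, k) \<in> affroots N" "\<not> pos_root (root_act x (i, j, k))" for i j k
  proof -
    have "w i \<noteq> w j"
      using that(1) assms inj_onD[of w "{0..<N}" i j] by (auto simp: x affroots_def)
    then show ?thesis
      using that(2) pos_root_of_level_pos[of "w i" "w j"] by (force simp: x root_act_def)
  qed
  have "{(i, j, k). (i, j, k) \<in> affroots N \<and> 0 \<le> k \<and> \<not> pos_root (root_act x (i, j, k))}
      \<subseteq> (SIGMA i:{..<N}. SIGMA j:{..<N}. {0..\<eta> (w i) - \<eta> (w j)})"
    using bound by (auto simp: affroots_def)
  then show ?thesis
    by (rule finite_subset) auto
qed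

lemma len_wmult_right_perm:
  assumes u: "u permutes {0..<N}"
  shows "len N (wmult x (\<lambda>_. 0, u)) =
    card {a \<in> affroots N. pos_root (root_act (\<lambda>_. 0, inv u) a) \<and> \<not> pos_root (root_act x a)}"
proof -
  have inv_u: "u (inv u i) = i" "inv u (u i) = i" for i
    using permutes_inverses[OF u] by auto
  have affroots: "(u i, u j, k) \<in> affroots N \<longleftrightarrow> (i, j, k) \<in> affroots N"
    "(inv u i, inv u j, k) \<in> affroots N \<longleftrightarrow> (i, j, k) \<in> affroots N" for i j k
    using permutes_in_image[OF u] permutes_in_image[OF permutes_inv[OF u]]
      permutes_inj[OF u] permutes_inj[OF permutes_inv[OF u]]
    by (auto simp: affroots_def inj_eq)
  have "bij_betw (root_act (\<lambda>_. 0, u)) (inversion_set N (wmult x (\<lambda>_. 0, u)))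
    {a \<in> affroots N. pos_root (root_act (\<lambda>_. 0, inv u) a) \<and> \<not> pos_root (root_act x a)}"
    by (rule bij_betw_byWitness[where f' = "root_act (\<lambda>_. 0, inv u)"])
      (auto simp: inversion_set_def root_act_wmult_right_perm inv_u affroots)
  then show ?thesis
    by (simp add: len_eq_card_inversion_set bij_betw_same_card)
qed

lemma finite_inversion_set:
  "inj_on (snd x) {0..<N} \<Longrightarrow> finite (inversion_set N x)"
  by (rule finite_subset[OF _ finite_nonneg_level_negated_roots])
    (auto simp: inversion_set_def dest: pos_root_level_nonneg)

lemma len_le_len_wmult_right_perm:
  assumes u: "u permutes {0..<N}" and inj: "inj_on (snd x) {0..<N}"
    and pos: "\<And>a. a \<in> inversion_set N x \<Longrightarrow> pos_root (root_act (\<lambda>_. 0, inv u) a)"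
  shows "len N x \<le> len N (wmult x (\<lambda>_. 0, u))"
proof -
  let ?S = "{a \<in> affroots N. pos_root (root_act (\<lambda>_. 0, inv u) a) \<and> \<not> pos_root (root_act x a)}"
  have "inversion_set N x \<subseteq> ?S"
    using pos by (auto simp: inversion_set_def)
  moreover have "finite ?S"
    by (rule finite_subset[OF _ finite_nonneg_level_negated_roots[OF inj]])
      (auto dest: pos_root_level_nonneg)
  ultimately have "card (inversion_set N x) \<le> card ?S"
    by (intro card_mono)
  then show ?thesis
    using len_wmult_right_perm[OF u, of x] by (simp add: len_eq_card_inversion_set)
qed

lemma len_wmult_descent_less:
  assumes w: "w permutes {0..<N}" and p: "Suc p < N" and descent: "w (Suc p) < w p"
  shows "len N (wmult (\<lambda>_. 0, w) (\<lambda>_. 0, transpose p (Suc p))) < len N (\<lambda>_. 0, w)"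
proof -
  let ?s = "transpose p (Suc p)"
  let ?S = "{a \<in> affroots N. pos_root (root_act (\<lambda>_. 0, inv ?s) a) \<and> \<not> pos_root (root_act (\<lambda>_. 0, w) a)}"
  have s: "?s permutes {0..<N}"
    using p by (intro permutes_swap_id) auto
  have "?S \<subseteq> inversion_set N (\<lambda>_. 0, w)"
  proof (clarsimp simp: inversion_set_def inv_transpose_eq)
    fix i j k
    assume "(i, j, k) \<in> affroots N" "pos_root (?s i, ?s j, k)" "\<not> pos_root (w i, w j, k)"
    then show "pos_root (i, j, k)"
      using descent by (auto simp: pos_root_def affroots_def transpose_def split: if_splits)
  qed
  moreover have "(p, Suc p, 0) \<in> inversion_set N (\<lambda>_. 0, w) - ?S"
    using p descent by (auto simp: inversion_set_def affroots_def pos_root_def inv_transpose_eq)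
  ultimately have "?S \<subset> inversion_set N (\<lambda>_. 0, w)"
    by blast
  moreover have "finite (inversion_set N (\<lambda>_. 0, w))"
    using permutes_inj_on[OF w] by (intro finite_inversion_set) simp
  ultimately have "card ?S < card (inversion_set N (\<lambda>_. 0, w))"
    by (intro psubset_card_mono)
  then show ?thesis
    using len_wmult_right_perm[OF s, of "(\<lambda>_. 0, w)"] by (simp add: len_eq_card_inversion_set)
qed

section \<open>Blocks of an ordered partition\<close>

definition increasing_on_blocks :: "nat list \<Rightarrow> (nat \<Rightarrow> 'a::order) \<Rightarrow> bool" where
  "increasing_on_blocks \<beta> f \<longleftrightarrow> (\<forall>p q. p < q \<longrightarrow> same_block \<beta> p q \<longrightarrow> f p < f q)"

definition sorted_on_blocks :: "nat list \<Rightarrow> (nat \<Rightarrow> 'a::order) \<Rightarrow> bool" where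
  "sorted_on_blocks \<beta> f \<longleftrightarrow> (\<forall>p q. p < q \<longrightarrow> same_block \<beta> p q \<longrightarrow> f p \<le> f q)"

lemma transpose_mem_Wbar_beta:
  "Suc i < N \<Longrightarrow> same_block \<beta> i (Suc i) \<Longrightarrow> transpose i (Suc i) \<in> Wbar_beta N \<beta>"
  using Wbar_beta.step[OF Wbar_beta.id] by simp

lemma Wbar_beta_comp:
  assumes "u \<in> Wbar_beta N \<beta>" and "v \<in> Wbar_beta N \<beta>"
  shows "u \<circ> v \<in> Wbar_beta N \<beta>"
  using assms
proof (induction rule: Wbar_beta.induct)
  case (step u i)
  then have "transpose i (Suc i) \<circ> (u \<circ> v) \<in> Wbar_beta N \<beta>"
    by (intro Wbar_beta.step)
  then show ?case
    by (simp only: comp_assoc)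
qed simp

lemma sum_weighted_transpose:
  fixes g :: "nat \<Rightarrow> 'a::comm_ring_1"
  assumes "Suc i < n"
  shows "(\<Sum>q<n. of_nat q * g (transpose i (Suc i) q)) = (\<Sum>q<n. of_nat q * g q) + g i - g (Suc i)"
proof -
  have split: "(\<Sum>q<n. h q) = (\<Sum>q\<in>{..<n} - {i, Suc i}. h q) + (h i + h (Suc i))"
    for h :: "nat \<Rightarrow> 'a"
  proof -
    have "(\<Sum>q<n. h q) = (\<Sum>q\<in>{..<n} - {i, Suc i}. h q) + (\<Sum>q\<in>{i, Suc i}. h q)"
      using assms by (intro sum.subset_diff) auto
    then show ?thesis
      by simp
  qed
  have "(\<Sum>q\<in>{..<n} - {i, Suc i}. of_nat q * g (transpose i (Suc i) q)) =
      (\<Sum>q\<in>{..<n} - {i, Suc i}. of_nat q * g q)"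
    by (rule sum.cong) (auto simp: transpose_def)
  then show ?thesis
    unfolding split[of "\<lambda>q. of_nat q * g (transpose i (Suc i) q)"] split[of "\<lambda>q. of_nat q * g q"]
    by (simp add: algebra_simps)
qed

locale blocks =
  fixes N :: nat and \<beta> :: "nat list"
  assumes sum_list_blocks: "sum_list \<beta> = N"
begin

definition block_start :: "nat \<Rightarrow> nat" where
  "block_start m = sum_list (take m \<beta>)"

definition block_index :: "nat \<Rightarrow> nat" where
  "block_index a = card {m. m < length \<beta> \<and> block_start (Suc m) \<le> a}"

lemma block_start_mono: "m \<le> m' \<Longrightarrow> block_start m \<le> block_start m'"
  by (auto simp: block_start_def take_add dest: le_Suc_ex)

lemma block_start_length: "block_start (length \<beta>) = N"
  by (simp add: block_start_def sum_list_blocks)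

lemma block_index_mono: "a \<le> b \<Longrightarrow> block_index a \<le> block_index b"
  unfolding block_index_def by (rule card_mono) auto

lemma block_index_eqI:
  assumes "m < length \<beta>" and "block_start m \<le> a" and "a < block_start (Suc m)"
  shows "block_index a = m"
proof -
  have "{m'. m' < length \<beta> \<and> block_start (Suc m') \<le> a} = {..<m}"
  proof (intro set_eqI iffI)
    fix m' assume "m' \<in> {m'. m' < length \<beta> \<and> block_start (Suc m') \<le> a}"
    then show "m' \<in> {..<m}"
      using assms block_start_mono[of "Suc m" "Suc m'"] by (auto simp: not_less[symmetric])
  next
    fix m' assume "m' \<in> {..<m}"
    then show "m' \<in> {m'. m' < length \<beta> \<and> block_start (Suc m') \<le> a}"
      using assms block_start_mono[of "Suc m'" m] by auto
  qed
  then show ?thesis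
    by (simp add: block_index_def)
qed

lemma block_containing:
  assumes "a < N"
  obtains m where "m < length \<beta>" "block_start m \<le> a" "a < block_start (Suc m)"
proof -
  have "a < block_start (Suc (length \<beta>))"
    using assms block_start_length block_start_mono[of "length \<beta>" "Suc (length \<beta>)"] by simp
  then have ex: "\<exists>m. a < block_start (Suc m)"
    by blast
  define m where "m = (LEAST m. a < block_start (Suc m))"
  have "a < block_start (Suc m)"
    unfolding m_def using ex by (rule LeastI_ex)
  moreover have "block_start m \<le> a"
  proof (cases m)
    case (Suc m')
    then show ?thesis
      using not_less_Least[of m' "\<lambda>m. a < block_start (Suc m)"] m_def by simp
  qed (simp add: block_start_def)
  moreover have "m < length \<beta>"
  proof (rule ccontr)
    assume "\<not> m < length \<beta>"
    then have "block_start m \<ge> N"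
      using block_start_mono block_start_length by (metis not_less)
    then show False
      using \<open>block_start m \<le> a\<close> assms by simp
  qed
  ultimately show ?thesis
    using that by blast
qed

lemma same_block_iff:
  "same_block \<beta> a b \<longleftrightarrow> a < N \<and> b < N \<and> block_index a = block_index b"
proof
  assume "same_block \<beta> a b"
  then obtain m where m: "m < length \<beta>" "block_start m \<le> a" "a < block_start (Suc m)"
    "block_start m \<le> b" "b < block_start (Suc m)"
    unfolding same_block_def block_start_def by blast
  moreover have "block_start (Suc m) \<le> N"
    using m(1) block_start_mono[of "Suc m" "length \<beta>"] block_start_length by simp
  ultimately show "a < N \<and> b < N \<and> block_index a = block_index b"
    using block_index_eqI by auto
next
  assume ab: "a < N \<and> b < N \<and> block_index a = block_index b"
  obtain m where m: "m < length \<beta>" "block_start m \<le> a" "a < block_start (Suc m)"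
    using ab block_containing by blast
  obtain m' where m': "m' < length \<beta>" "block_start m' \<le> b" "b < block_start (Suc m')"
    using ab block_containing by blast
  have "m = m'"
    using block_index_eqI[OF m] block_index_eqI[OF m'] ab by simp
  then show "same_block \<beta> a b"
    unfolding same_block_def using m m' by (auto simp: block_start_def)
qed

lemma block_index_less_imp_less: "block_index p < block_index q \<Longrightarrow> p < q"
  using block_index_mono by (metis not_less)

lemma same_block_adjacent:
  assumes "same_block \<beta> p q" and "p \<le> k" and "k < q"
  shows "same_block \<beta> k (Suc k)"
  using assms block_index_mono[of p k] block_index_mono[of k q] block_index_mono[of "Suc k" q]
    block_index_mono[of k "Suc k"]
  by (simp add: same_block_iff)

lemma increasing_on_blocksI:
  assumes "\<And>i. Suc i < N \<Longrightarrow> same_block \<beta> i (Suc i) \<Longrightarrow> f i < f (Suc i)"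
  shows "increasing_on_blocks \<beta> f"
  unfolding increasing_on_blocks_def
proof (intro allI impI)
  fix p q assume "p < q" "same_block \<beta> p q"
  let ?K = "{k. same_block \<beta> k (Suc k)}"
  have "f k < f (Suc k)" if "k \<in> ?K" for k
    using that assms same_block_iff by blast
  moreover have "{p..<q} \<subseteq> ?K"
    using \<open>p < q\<close> \<open>same_block \<beta> p q\<close> same_block_adjacent by auto
  ultimately show "f p < f q"
    using lift_Suc_mono_less_ivl[of ?K f p q] \<open>p < q\<close> by simp
qed

lemma sorted_on_blocksI:
  assumes "\<And>i. Suc i < N \<Longrightarrow> same_block \<beta> i (Suc i) \<Longrightarrow> f i \<le> f (Suc i)"
  shows "sorted_on_blocks \<beta> f"
  unfolding sorted_on_blocks_def
proof (intro allI impI)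
  fix p q assume "p < q" "same_block \<beta> p q"
  let ?K = "{k. same_block \<beta> k (Suc k)}"
  have "f k \<le> f (Suc k)" if "k \<in> ?K" for k
    using that assms same_block_iff by blast
  moreover have "{p..<q} \<subseteq> ?K"
    using \<open>p < q\<close> \<open>same_block \<beta> p q\<close> same_block_adjacent by auto
  ultimately show "f p \<le> f q"
    using lift_Suc_mono_le_ivl[of ?K f p q] \<open>p < q\<close> by simp
qed

definition block_preserving :: "(nat \<Rightarrow> nat) \<Rightarrow> bool" where
  "block_preserving v \<longleftrightarrow> v permutes {0..<N} \<and> (\<forall>p. block_index (v p) = block_index p)"

lemma Wbar_beta_block_preserving: "v \<in> Wbar_beta N \<beta> \<Longrightarrow> block_preserving v"
proof (induction rule: Wbar_beta.induct)
  case (step v i)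
  have "transpose i (Suc i) permutes {0..<N}"
    using step.hyps(2) by (intro permutes_swap_id) auto
  then have "transpose i (Suc i) \<circ> v permutes {0..<N}"
    using step.IH by (intro permutes_compose) (simp_all add: block_preserving_def)
  moreover have "block_index ((transpose i (Suc i) \<circ> v) p) = block_index p" for p
  proof -
    have "block_index (transpose i (Suc i) q) = block_index q" for q
      using step.hyps(3) by (auto simp: same_block_iff transpose_def)
    then show ?thesis
      using step.IH by (simp add: block_preserving_def)
  qed
  ultimately show ?case
    unfolding block_preserving_def by blast
next
  case id
  then show ?case
    unfolding block_preserving_def using permutes_id by auto
qed

lemma block_preserving_inv:
  assumes "block_preserving v"
  shows "block_preserving (inv v)"
proof -
  have v: "v permutes {0..<N}" and "\<forall>p. block_index (v p) = block_index p"
    using assms by (simp_all add: block_preserving_def)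
  then have "block_index (inv v p) = block_index p" for p
    by (metis permutes_inverses(1)[OF v])
  then show ?thesis
    using permutes_inv[OF v] by (simp add: block_preserving_def)
qed

lemma block_preserving_comp:
  "block_preserving u \<Longrightarrow> block_preserving v \<Longrightarrow> block_preserving (u \<circ> v)"
  unfolding block_preserving_def by (auto intro: permutes_compose)

lemma block_preserving_less:
  "block_preserving v \<Longrightarrow> block_index p < block_index q \<Longrightarrow> v p < v q"
  using block_index_less_imp_less[of "v p" "v q"] by (simp add: block_preserving_def)

lemma sorted_on_blocks_mono_on:
  assumes "sorted_on_blocks \<beta> f"
  shows "mono_on {q. q < N \<and> block_index q = b} f"
proof (rule mono_onI)
  fix r s assume "r \<in> {q. q < N \<and> block_index q = b}" "s \<in> {q. q < N \<and> block_index q = b}" "r \<le> s"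
  then show "f r \<le> f s"
    using assms by (cases "r = s") (auto simp: sorted_on_blocks_def same_block_iff)
qed

lemma block_preserving_bij_betw_block:
  assumes "block_preserving \<pi>"
  shows "bij_betw \<pi> {q. q < N \<and> block_index q = b} {q. q < N \<and> block_index q = b}"
proof -
  let ?A = "{q. q < N \<and> block_index q = b}"
  have \<pi>: "\<pi> permutes {0..<N}" and "\<forall>p. block_index (\<pi> p) = block_index p"
    using assms by (simp_all add: block_preserving_def)
  then have "\<pi> ` ?A \<subseteq> ?A"
    using permutes_in_image[OF \<pi>] by auto
  moreover have "inj_on \<pi> ?A"
    using permutes_inj[OF \<pi>] by (rule inj_on_subset) simp
  ultimately show ?thesis
    by (simp add: bij_betw_def endo_inj_surj)
qed

lemma sorted_on_blocks_rearrangement_eq: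
  fixes l :: "nat \<Rightarrow> 'a::linorder"
  assumes v1: "block_preserving v1" and v2: "block_preserving v2"
    and sorted1: "sorted_on_blocks \<beta> (l \<circ> v1)" and sorted2: "sorted_on_blocks \<beta> (l \<circ> v2)"
  shows "l \<circ> v1 = l \<circ> v2"
proof
  fix p
  have v1p: "v1 permutes {0..<N}" and v2p: "v2 permutes {0..<N}"
    using v1 v2 by (simp_all add: block_preserving_def)
  show "(l \<circ> v1) p = (l \<circ> v2) p"
  proof (cases "p < N")
    case True
    let ?A = "{q. q < N \<and> block_index q = block_index p}"
    have \<pi>: "block_preserving (inv v1 \<circ> v2)"
      using block_preserving_comp[OF block_preserving_inv[OF v1] v2] .
    have "(l \<circ> v1) \<circ> (inv v1 \<circ> v2) = l \<circ> v2"
      using permutes_inv_o(1)[OF v1p] by (metis comp_assoc comp_id)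
    then have "mono_on ?A ((l \<circ> v1) \<circ> (inv v1 \<circ> v2))"
      using sorted_on_blocks_mono_on[OF sorted2] by (simp only:)
    moreover have "finite ?A" and "p \<in> ?A"
      using True by auto
    ultimately have "(l \<circ> v1) ((inv v1 \<circ> v2) p) = (l \<circ> v1) p"
      by (intro mono_on_bij_betw_eq[OF _ block_preserving_bij_betw_block[OF \<pi>]
          sorted_on_blocks_mono_on[OF sorted1]])
    then show ?thesis
      using permutes_inverses(1)[OF v1p] by simp
  next
    case False
    then show ?thesis
      using permutes_not_in[OF v1p] permutes_not_in[OF v2p] by simp
  qed
qed

lemma finite_Wbar_beta: "finite (Wbar_beta N \<beta>)"
  using Wbar_beta_block_preserving
  by (intro finite_subset[OF _ finite_permutations[of "{0..<N}"]]) (auto simp: block_preserving_def)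

text \<open>Bubble sort: a permutation maximising the potential \<open>\<Sum>q<N. q * l (v q)\<close> has no
  descent inside a block, because swapping a descent raises the potential.\<close>

lemma ex_Wbar_beta_sorted_on_blocks:
  fixes l :: "nat \<Rightarrow> 'a::linordered_idom"
  shows "\<exists>v\<in>Wbar_beta N \<beta>. sorted_on_blocks \<beta> (l \<circ> v)"
proof -
  define T where "T v = (\<Sum>q<N. of_nat q * l (v q))" for v
  have "Max (T ` Wbar_beta N \<beta>) \<in> T ` Wbar_beta N \<beta>"
    using finite_Wbar_beta Wbar_beta.id by (intro Max_in) auto
  then obtain v where v: "v \<in> Wbar_beta N \<beta>" and "T v = Max (T ` Wbar_beta N \<beta>)"
    by auto
  then have max: "T v' \<le> T v" if "v' \<in> Wbar_beta N \<beta>" for v'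
    using finite_Wbar_beta that by simp
  have "sorted_on_blocks \<beta> (l \<circ> v)"
  proof (rule sorted_on_blocksI)
    fix i assume i: "Suc i < N" "same_block \<beta> i (Suc i)"
    show "(l \<circ> v) i \<le> (l \<circ> v) (Suc i)"
    proof (rule ccontr)
      assume "\<not> (l \<circ> v) i \<le> (l \<circ> v) (Suc i)"
      moreover have "T (v \<circ> transpose i (Suc i)) = T v + l (v i) - l (v (Suc i))"
        using sum_weighted_transpose[OF i(1), of "l \<circ> v"] by (simp add: T_def)
      moreover have "T (v \<circ> transpose i (Suc i)) \<le> T v"
        using max Wbar_beta_comp[OF v transpose_mem_Wbar_beta[OF i]] .
      ultimately show False
        by simp
    qed
  qed
  then show ?thesis
    using v by blast
qed

section \<open>The representatives X^\<beta>\<close>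

lemma len_le_len_wmult_block_preserving:
  assumes \<sigma>: "\<sigma> permutes {0..<N}" and increasing: "increasing_on_blocks \<beta> \<sigma>"
    and sorted: "sorted_on_blocks \<beta> (\<mu> \<circ> \<sigma>)" and u: "block_preserving u"
  shows "len N (\<mu>, \<sigma>) \<le> len N (wmult (\<mu>, \<sigma>) (\<lambda>_. 0, u))"
proof (rule len_le_len_wmult_right_perm)
  have up: "u permutes {0..<N}"
    using u by (simp add: block_preserving_def)
  then show "u permutes {0..<N}" .
  show "inj_on (snd (\<mu>, \<sigma>)) {0..<N}"
    using permutes_inj_on[OF \<sigma>] by simp
  fix a assume "a \<in> inversion_set N (\<mu>, \<sigma>)"
  then obtain i j k where a: "a = (i, j, k)" and ij: "i < N" "j < N" "i \<noteq> j"
    and pos: "pos_root (i, j, k)" and neg: "\<not> pos_root (\<sigma> i, \<sigma> j, k - (\<mu> (\<sigma> i) - \<mu> (\<sigma> j)))"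
    by (cases a) (auto simp: inversion_set_def affroots_def root_act_def)
  have inv_u_ne: "inv u i \<noteq> inv u j"
    using ij(3) permutes_inverses(1)[OF up] by metis
  show "pos_root (root_act (\<lambda>_. 0, inv u) a)"
  proof (cases "0 < k")
    case True
    then show ?thesis
      using inv_u_ne by (simp add: a pos_root_of_level_pos)
  next
    case False
    then have k: "k = 0" and "i < j"
      using pos by (auto simp: pos_root_def)
    have "\<not> same_block \<beta> i j"
    proof
      assume "same_block \<beta> i j"
      then have "\<sigma> i < \<sigma> j" and "\<mu> (\<sigma> i) \<le> \<mu> (\<sigma> j)"
        using \<open>i < j\<close> increasing sorted by (auto simp: increasing_on_blocks_def sorted_on_blocks_def)
      then show False
        using neg k by (simp add: pos_root_def)
    qed
    then have "block_index i < block_index j"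
      using \<open>i < j\<close> ij block_index_mono[of i j] by (simp add: same_block_iff)
    then have "inv u i < inv u j"
      by (rule block_preserving_less[OF block_preserving_inv[OF u]])
    then show ?thesis
      by (simp add: a k pos_root_def)
  qed
qed

lemma mem_Wbar_beta_min_iff:
  "w \<in> Wbar_beta_min N \<beta> \<longleftrightarrow> w permutes {0..<N} \<and> increasing_on_blocks \<beta> w"
proof
  assume "w \<in> Wbar_beta_min N \<beta>"
  then have w: "w permutes {0..<N}"
    and minimal: "\<And>u. u \<in> Wbar_beta N \<beta> \<Longrightarrow> len N (\<lambda>_. 0, w) \<le> len N (wmult (\<lambda>_. 0, w) (\<lambda>_. 0, u))"
    by (auto simp: Wbar_beta_min_def Wbar_def W_beta_def)
  have "increasing_on_blocks \<beta> w"
  proof (rule increasing_on_blocksI)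
    fix i assume i: "Suc i < N" "same_block \<beta> i (Suc i)"
    show "w i < w (Suc i)"
    proof (rule ccontr)
      assume "\<not> w i < w (Suc i)"
      moreover have "w i \<noteq> w (Suc i)"
        using permutes_inj[OF w] by (metis injD n_not_Suc_n)
      ultimately have "w (Suc i) < w i"
        by simp
      then have "len N (wmult (\<lambda>_. 0, w) (\<lambda>_. 0, transpose i (Suc i))) < len N (\<lambda>_. 0, w)"
        by (rule len_wmult_descent_less[OF w i(1)])
      then show False
        using minimal[OF transpose_mem_Wbar_beta[OF i]] by simp
    qed
  qed
  then show "w permutes {0..<N} \<and> increasing_on_blocks \<beta> w"
    using w by simp
next
  assume w: "w permutes {0..<N} \<and> increasing_on_blocks \<beta> w"
  have "len N (\<lambda>_. 0, w) \<le> len N (wmult (\<lambda>_. 0, w) (\<lambda>_. 0, u))" if "u \<in> Wbar_beta N \<beta>" for u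
    using w Wbar_beta_block_preserving[OF that]
    by (intro len_le_len_wmult_block_preserving) (auto simp: sorted_on_blocks_def)
  then show "w \<in> Wbar_beta_min N \<beta>"
    using w by (simp add: Wbar_beta_min_def W_beta_def Waff_def Pbar_def Wbar_def)
qed

lemma mem_X_beta_iff:
  "(\<mu>, \<sigma>) \<in> X_beta N \<beta> \<longleftrightarrow> \<sigma> permutes {0..<N} \<and> increasing_on_blocks \<beta> \<sigma> \<and> (\<forall>j\<ge>N. \<mu> j = 0) \<and>
     (\<forall>i. Suc i < N \<longrightarrow> \<mu> i + (if desc_cond \<beta> \<sigma> i then 1 else 0) \<le> \<mu> (Suc i))"
  by (simp add: X_beta_def mem_Wbar_beta_min_iff mem_Pbar_minus_w_iff)

lemma X_beta_subset_Waff: "X_beta N \<beta> \<subseteq> Waff N"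
  by (auto simp: mem_X_beta_iff Waff_def Pbar_def Wbar_def)

lemma X_beta_sorted_on_blocks:
  assumes "(\<mu>, \<sigma>) \<in> X_beta N \<beta>"
  shows "sorted_on_blocks \<beta> (\<mu> \<circ> \<sigma>)"
  unfolding sorted_on_blocks_def
proof (intro allI impI)
  fix p q assume "p < q" "same_block \<beta> p q"
  have \<sigma>: "\<sigma> permutes {0..<N}" and "increasing_on_blocks \<beta> \<sigma>"
    and adjacent: "\<And>i. Suc i < N \<Longrightarrow> \<mu> i \<le> \<mu> (Suc i)"
    using assms by (auto simp: mem_X_beta_iff split: if_splits intro: order_trans[rotated])
  then have "\<sigma> p < \<sigma> q"
    using \<open>p < q\<close> \<open>same_block \<beta> p q\<close> by (simp add: increasing_on_blocks_def)
  moreover have "{\<sigma> p..<\<sigma> q} \<subseteq> {i. Suc i < N}"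
    using \<open>same_block \<beta> p q\<close> permutes_in_image[OF \<sigma>, of q] by (auto simp: same_block_iff)
  ultimately show "(\<mu> \<circ> \<sigma>) p \<le> (\<mu> \<circ> \<sigma>) q"
    using lift_Suc_mono_le_ivl[of "{i. Suc i < N}" \<mu> "\<sigma> p" "\<sigma> q"] adjacent by simp
qed

lemma X_beta_subset_W_beta: "X_beta N \<beta> \<subseteq> W_beta N \<beta>"
proof clarify
  fix \<mu> \<sigma> assume x: "(\<mu>, \<sigma>) \<in> X_beta N \<beta>"
  then have "len N (\<mu>, \<sigma>) \<le> len N (wmult (\<mu>, \<sigma>) (\<lambda>_. 0, u))" if "u \<in> Wbar_beta N \<beta>" for u
    using X_beta_sorted_on_blocks[OF x] Wbar_beta_block_preserving[OF that]
    by (intro len_le_len_wmult_block_preserving) (auto simp: mem_X_beta_iff)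
  then show "(\<mu>, \<sigma>) \<in> W_beta N \<beta>"
    using X_beta_subset_Waff x by (auto simp: W_beta_def)
qed

text \<open>An element of X^\<beta> lists its values in increasing order; among equal values the
  later blocks come first, and within a block the positions increase.\<close>

definition position_key :: "(nat \<Rightarrow> 'a) \<Rightarrow> nat \<Rightarrow> 'a \<times> int \<times> nat" where
  "position_key l p = (l p, - int (block_index p), p)"

lemma inj_position_key: "inj (position_key l)"
  by (rule injI) (simp add: position_key_def)

lemma X_beta_eq_rank_perm:
  assumes "(\<mu>, \<sigma>) \<in> X_beta N \<beta>"
  shows "\<sigma> = rank_perm N (position_key (\<mu> \<circ> \<sigma>))"
proof (rule rank_perm_unique)
  have \<sigma>: "\<sigma> permutes {0..<N}" and increasing: "increasing_on_blocks \<beta> \<sigma>"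
    and adjacent: "\<And>i. Suc i < N \<Longrightarrow> \<mu> i + (if desc_cond \<beta> \<sigma> i then 1 else 0) \<le> \<mu> (Suc i)"
    using assms by (simp_all add: mem_X_beta_iff)
  show "\<sigma> permutes {0..<N}"
    by (fact \<sigma>)
  fix i assume i: "Suc i < N"
  define p q where "p = inv \<sigma> i" and "q = inv \<sigma> (Suc i)"
  have \<sigma>pq: "\<sigma> p = i" "\<sigma> q = Suc i"
    unfolding p_def q_def using permutes_inverses(1)[OF \<sigma>] by auto
  have pq: "p < N" "q < N"
    unfolding p_def q_def using permutes_in_image[OF permutes_inv[OF \<sigma>]] i by auto
  have "p \<noteq> q"
    using \<sigma>pq by auto
  have "(- int (block_index p), p) < (- int (block_index q), q)"
    if "\<not> desc_cond \<beta> \<sigma> i"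
  proof (cases "same_block \<beta> p q")
    case True
    have "\<not> q < p"
    proof
      assume "q < p"
      moreover have "same_block \<beta> q p"
        using True by (auto simp: same_block_iff)
      ultimately have "\<sigma> q < \<sigma> p"
        using increasing by (simp add: increasing_on_blocks_def)
      then show False
        using \<sigma>pq by simp
    qed
    then show ?thesis
      using True \<open>p \<noteq> q\<close> by (simp add: same_block_iff)
  next
    case False
    then have "q < p"
      using that \<open>p \<noteq> q\<close> unfolding desc_cond_def p_def[symmetric] q_def[symmetric] by auto
    then have "block_index q < block_index p"
      using False pq block_index_mono[of q p] by (simp add: same_block_iff)
    then show ?thesis
      by simp
  qed
  then show "position_key (\<mu> \<circ> \<sigma>) (inv \<sigma> i) < position_key (\<mu> \<circ> \<sigma>) (inv \<sigma> (Suc i))"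
    using adjacent[OF i] by (auto simp: position_key_def \<sigma>pq simp flip: p_def q_def split: if_splits)
qed

lemma X_beta_eqI:
  assumes x1: "(\<mu>1, \<sigma>1) \<in> X_beta N \<beta>" and x2: "(\<mu>2, \<sigma>2) \<in> X_beta N \<beta>"
    and eq: "\<mu>1 \<circ> \<sigma>1 = \<mu>2 \<circ> \<sigma>2"
  shows "(\<mu>1, \<sigma>1) = (\<mu>2, \<sigma>2)"
proof -
  have \<sigma>: "\<sigma>1 = \<sigma>2"
    using X_beta_eq_rank_perm[OF x1] X_beta_eq_rank_perm[OF x2] eq by simp
  have "\<sigma>1 permutes {0..<N}" "\<sigma>2 permutes {0..<N}"
    using x1 x2 by (simp_all add: mem_X_beta_iff)
  then have "\<mu>1 = \<mu>1 \<circ> \<sigma>1 \<circ> inv \<sigma>1" "\<mu>2 = \<mu>2 \<circ> \<sigma>2 \<circ> inv \<sigma>2"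
    by (simp_all add: comp_assoc permutes_inv_o(1))
  then show ?thesis
    using \<sigma> eq by metis
qed

lemma rank_perm_mem_X_beta:
  assumes sorted: "sorted_on_blocks \<beta> l" and zero: "\<forall>j\<ge>N. l j = 0"
  defines "\<sigma> \<equiv> rank_perm N (position_key l)"
  shows "(l \<circ> inv \<sigma>, \<sigma>) \<in> X_beta N \<beta>"
  unfolding mem_X_beta_iff
proof (intro conjI allI impI)
  have inj: "inj_on (position_key l) {0..<N}"
    using inj_position_key by (rule inj_on_subset) simp
  show \<sigma>: "\<sigma> permutes {0..<N}"
    unfolding \<sigma>_def using inj by (rule rank_perm_permutes)
  have less_iff: "\<sigma> p < \<sigma> q \<longleftrightarrow> position_key l p < position_key l q" if "p < N" "q < N" for p q
    unfolding \<sigma>_def using rank_perm_less_iff[OF inj that] .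
  show "increasing_on_blocks \<beta> \<sigma>"
    unfolding increasing_on_blocks_def
    using sorted less_iff by (auto simp: sorted_on_blocks_def same_block_iff position_key_def)
  show "(l \<circ> inv \<sigma>) j = 0" if "N \<le> j" for j
    using that zero permutes_not_in[OF permutes_inv[OF \<sigma>]] by simp
  fix i assume i: "Suc i < N"
  define p q where "p = inv \<sigma> i" and "q = inv \<sigma> (Suc i)"
  have \<sigma>pq: "\<sigma> p = i" "\<sigma> q = Suc i"
    unfolding p_def q_def using permutes_inverses(1)[OF \<sigma>] by auto
  have pq: "p < N" "q < N"
    unfolding p_def q_def using permutes_in_image[OF permutes_inv[OF \<sigma>]] i by auto
  have key: "position_key l p < position_key l q"
    using less_iff[OF pq] \<sigma>pq by simp
  have "l p < l q" if "desc_cond \<beta> \<sigma> i"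
  proof -
    have "p < q" and "\<not> same_block \<beta> p q"
      using that by (simp_all add: desc_cond_def p_def q_def)
    then have "block_index p < block_index q"
      using pq block_index_mono[of p q] by (simp add: same_block_iff)
    then show ?thesis
      using key by (auto simp: position_key_def)
  qed
  moreover have "l p \<le> l q"
    using key by (auto simp: position_key_def)
  ultimately show "(l \<circ> inv \<sigma>) i + (if desc_cond \<beta> \<sigma> i then 1 else 0) \<le> (l \<circ> inv \<sigma>) (Suc i)"
    by (simp add: p_def q_def add1_zle_eq)
qed

lemma double_coset_meets_X_beta:
  assumes "x \<in> Waff N"
  shows "\<exists>u v. u \<in> Wbar N \<and> v \<in> Wbar_beta N \<beta> \<and> wmult (\<lambda>_. 0, u) (wmult x (\<lambda>_. 0, v)) \<in> X_beta N \<beta>"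
proof -
  obtain \<eta> w where x: "x = (\<eta>, w)" and \<eta>: "\<forall>j\<ge>N. \<eta> j = 0" and w: "w permutes {0..<N}"
    using assms by (auto simp: Waff_def Pbar_def Wbar_def)
  obtain v where v: "v \<in> Wbar_beta N \<beta>" and sorted: "sorted_on_blocks \<beta> ((\<eta> \<circ> w) \<circ> v)"
    using ex_Wbar_beta_sorted_on_blocks by blast
  have vp: "v permutes {0..<N}"
    using Wbar_beta_block_preserving[OF v] by (simp add: block_preserving_def)
  define l where "l = \<eta> \<circ> w \<circ> v"
  define \<sigma> where "\<sigma> = rank_perm N (position_key l)"
  define u where "u = \<sigma> \<circ> inv v \<circ> inv w"
  have \<sigma>: "\<sigma> permutes {0..<N}"
    unfolding \<sigma>_def by (rule rank_perm_permutes[OF inj_on_subset[OF inj_position_key subset_UNIV]])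
  have u: "u permutes {0..<N}"
    unfolding u_def by (intro permutes_compose permutes_inv w vp \<sigma>)
  have "u \<circ> w \<circ> v = \<sigma>"
    by (simp add: u_def comp_assoc permutes_inv_o(2)[OF w] permutes_inv_o(2)[OF vp])
  moreover have "inv u = w \<circ> v \<circ> inv \<sigma>"
    by (rule inv_unique_comp)
      (simp_all add: u_def fun_eq_iff permutes_inverses[OF w] permutes_inverses[OF vp] permutes_inverses[OF \<sigma>])
  ultimately have "wmult (\<lambda>_. 0, u) (wmult x (\<lambda>_. 0, v)) = (l \<circ> inv \<sigma>, \<sigma>)"
    by (simp add: x wmult_double_coset l_def comp_assoc)
  moreover have "(l \<circ> inv \<sigma>, \<sigma>) \<in> X_beta N \<beta>"
    unfolding \<sigma>_def
  proof (rule rank_perm_mem_X_beta)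
    show "sorted_on_blocks \<beta> l"
      using sorted by (simp add: l_def comp_assoc)
    show "\<forall>j\<ge>N. l j = 0"
      using \<eta> permutes_not_in[OF w] permutes_not_in[OF vp] by (simp add: l_def)
  qed
  ultimately show ?thesis
    using u v unfolding Wbar_def mem_Collect_eq by metis
qed

lemma double_coset_X_beta_unique:
  assumes u1: "u1 \<in> Wbar N" and v1: "v1 \<in> Wbar_beta N \<beta>"
    and u2: "u2 \<in> Wbar N" and v2: "v2 \<in> Wbar_beta N \<beta>"
    and x1: "wmult (\<lambda>_. 0, u1) (wmult x (\<lambda>_. 0, v1)) \<in> X_beta N \<beta>"
    and x2: "wmult (\<lambda>_. 0, u2) (wmult x (\<lambda>_. 0, v2)) \<in> X_beta N \<beta>"
  shows "wmult (\<lambda>_. 0, u1) (wmult x (\<lambda>_. 0, v1)) = wmult (\<lambda>_. 0, u2) (wmult x (\<lambda>_. 0, v2))"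
proof -
  obtain \<eta> w where x: "x = (\<eta>, w)"
    by (cases x)
  have composed: "(\<eta> \<circ> inv u) \<circ> (u \<circ> w \<circ> v) = (\<eta> \<circ> w) \<circ> v"
    if "u \<in> Wbar N" for u v :: "nat \<Rightarrow> nat"
    using permutes_inverses(2)[of u "{0..<N}"] that by (simp add: Wbar_def fun_eq_iff)
  have sorted: "sorted_on_blocks \<beta> ((\<eta> \<circ> w) \<circ> v)"
    if "u \<in> Wbar N" and "wmult (\<lambda>_. 0, u) (wmult x (\<lambda>_. 0, v)) \<in> X_beta N \<beta>" for u v
  proof -
    have "(\<eta> \<circ> inv u, u \<circ> w \<circ> v) \<in> X_beta N \<beta>"
      using that(2) by (simp add: x wmult_double_coset)
    then have "sorted_on_blocks \<beta> ((\<eta> \<circ> inv u) \<circ> (u \<circ> w \<circ> v))"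
      by (rule X_beta_sorted_on_blocks)
    then show ?thesis
      by (simp only: composed[OF that(1)])
  qed
  have "(\<eta> \<circ> w) \<circ> v1 = (\<eta> \<circ> w) \<circ> v2"
    using sorted[OF u1 x1] sorted[OF u2 x2]
      Wbar_beta_block_preserving[OF v1] Wbar_beta_block_preserving[OF v2]
    by (intro sorted_on_blocks_rearrangement_eq)
  then have "(\<eta> \<circ> inv u1, u1 \<circ> w \<circ> v1) = (\<eta> \<circ> inv u2, u2 \<circ> w \<circ> v2)"
    using x1 x2 by (intro X_beta_eqI) (simp_all add: x wmult_double_coset composed[OF u1] composed[OF u2])
  then show ?thesis
    by (simp add: x wmult_double_coset)
qed

end

theorem proposition2p13:
  fixes N :: nat and \<beta> :: "nat list"
  assumes "N \<ge> 2" and "ordered_partition N \<beta>"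
  shows "X_beta N \<beta> \<subseteq> Waff N
    \<and> (\<forall>x \<in> Waff N. \<exists>!y. y \<in> X_beta N \<beta> \<and>
          (\<exists>u v. u \<in> Wbar N \<and> v \<in> Wbar_beta N \<beta> \<and>
                 y = wmult (\<lambda>_. 0, u) (wmult x (\<lambda>_. 0, v))))
    \<and> X_beta N \<beta> \<subseteq> W_beta N \<beta>"
proof -
  interpret blocks N \<beta>
    using assms(2) by unfold_locales (simp add: ordered_partition_def)
  have "\<exists>!y. y \<in> X_beta N \<beta> \<and> (\<exists>u v. u \<in> Wbar N \<and> v \<in> Wbar_beta N \<beta> \<and>
      y = wmult (\<lambda>_. 0, u) (wmult x (\<lambda>_. 0, v)))" if "x \<in> Waff N" for x
    using double_coset_meets_X_beta[OF that] double_coset_X_beta_unique by blast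
  then show ?thesis
    using X_beta_subset_Waff X_beta_subset_W_beta by blast
qed

end
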